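(* Let $n$ be a positive integer divisible by $q-1$ with $l(n)\ge3(q-1)$, let $\beta\in\mathcal{M}_2(n)$ be an ordered tuple that is maximal for $|\cdot|_1$ (among all of $\mathcal{M}_2(n)$), and let $e$ be the number of even entries of $\beta$. (i) If $e=q-1$, then $|\beta|_1=|\beta|_2$ and $\beta$ is maximal for $|\cdot|_2$. (ii) If $0\le e<q-1$, let $\mu$ be obtained from $\beta$ by replacing every entry $\beta_j$ with $1\le j\le q-1$ and $\beta_j\le\beta_{q-1}$ by $\beta_{q-1}-1$; then $\mu\in\mathcal{M}_2(n)$ is ordered and maximal for $|\cdot|_2$. (iii) If $q-1<e\le2(q-1)$, let $\mu$ be obtained from $\beta$ by replacing every entry $\beta_j$ with $q\le j\le2(q-1)$ and $\beta_j\le\beta_q$ by $\beta_q-1$; then $\mu\in\mathcal{M}_2(n)$ is ordered and maximal for $|\cdot|_2$.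
   Context: For $n=\sum_in_iq^i$ in base $q$, $l(n)=\sum_in_i$. For $\beta\in\mathbb{N}^{2(q-1)}$, $|\beta|_1=\sum_iq^{\beta_i}$; $\mathcal{M}_2(n)=\{\beta\in\mathbb{N}^{2(q-1)}:|\beta|_1\le n\}$; $\mu$ is maximal for $|\cdot|_1$ if $|\mu|_1\ge|\beta|_1$ for all $\beta\in\mathcal{M}_2(n)$. A tuple $\beta\in\mathbb{N}^{2(q-1)}$ is ordered if there is $e$ with $0\le e\le2(q-1)$ such that $\beta_1\ge\cdots\ge\beta_e$ are all even ($0$ counts as even) and $\beta_{e+1}\le\cdots\le\beta_{2(q-1)}$ are all odd (so $e$ is the number of even entries); for such $\beta$, $|\beta|_2=\sum_{i=1}^{\min\{e,q-1\}}q^{\beta_i}+\sum_{i=\max\{q,e+1\}}^{2(q-1)}q^{\beta_i}$. An ordered $\mu\in\mathcal{M}_2(n)$ is maximal for $|\cdot|_2$ if $|\mu|_2\ge|\gamma|_2$ for every ordered $\gamma\in\mathcal{M}_2(n)$. *)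

theory Defs
  imports Main
begin

text \<open>Tuples in N^{2(q-1)} are represented as functions nat => nat, using only the
  indices 1..2(q-1) (1-based, as in the paper); values at other indices are ignored
  by every definition below.\<close>

function digit_sum :: "nat \<Rightarrow> nat \<Rightarrow> nat" where
  "digit_sum q n = (if q < 2 \<or> n = 0 then 0 else n mod q + digit_sum q (n div q))"
  by auto
termination
  by (relation "measure snd") auto

definition norm1 :: "nat \<Rightarrow> (nat \<Rightarrow> nat) \<Rightarrow> nat" where
  "norm1 q \<beta> = (\<Sum>i = 1..2*(q-1). q ^ \<beta> i)"

definition inM2 :: "nat \<Rightarrow> nat \<Rightarrow> (nat \<Rightarrow> nat) \<Rightarrow> bool" where
  "inM2 q n \<beta> \<longleftrightarrow> norm1 q \<beta> \<le> n"

definition maximal1 :: "nat \<Rightarrow> nat \<Rightarrow> (nat \<Rightarrow> nat) \<Rightarrow> bool" where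
  "maximal1 q n \<mu> \<longleftrightarrow> inM2 q n \<mu> \<and> (\<forall>\<gamma>. inM2 q n \<gamma> \<longrightarrow> norm1 q \<gamma> \<le> norm1 q \<mu>)"

definition num_even :: "nat \<Rightarrow> (nat \<Rightarrow> nat) \<Rightarrow> nat" where
  "num_even q \<beta> = card {i \<in> {1..2*(q-1)}. even (\<beta> i)}"

definition ordered_with :: "nat \<Rightarrow> (nat \<Rightarrow> nat) \<Rightarrow> nat \<Rightarrow> bool" where
  "ordered_with q \<beta> e \<longleftrightarrow> e \<le> 2*(q-1)
     \<and> (\<forall>i \<in> {1..e}. even (\<beta> i))
     \<and> (\<forall>i j. 1 \<le> i \<and> i \<le> j \<and> j \<le> e \<longrightarrow> \<beta> j \<le> \<beta> i)
     \<and> (\<forall>i \<in> {e+1..2*(q-1)}. odd (\<beta> i))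
     \<and> (\<forall>i j. e+1 \<le> i \<and> i \<le> j \<and> j \<le> 2*(q-1) \<longrightarrow> \<beta> i \<le> \<beta> j)"

definition ordered :: "nat \<Rightarrow> (nat \<Rightarrow> nat) \<Rightarrow> bool" where
  "ordered q \<beta> \<longleftrightarrow> (\<exists>e. ordered_with q \<beta> e)"

definition norm2 :: "nat \<Rightarrow> (nat \<Rightarrow> nat) \<Rightarrow> nat" where
  "norm2 q \<beta> = (let e = num_even q \<beta> in
      (\<Sum>i = 1..min e (q-1). q ^ \<beta> i) + (\<Sum>i = max q (e+1)..2*(q-1). q ^ \<beta> i))"

definition maximal2 :: "nat \<Rightarrow> nat \<Rightarrow> (nat \<Rightarrow> nat) \<Rightarrow> bool" where
  "maximal2 q n \<mu> \<longleftrightarrow> ordered q \<mu> \<and> inM2 q n \<mu>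
     \<and> (\<forall>\<gamma>. ordered q \<gamma> \<and> inM2 q n \<gamma> \<longrightarrow> norm2 q \<gamma> \<le> norm2 q \<mu>)"

end

theory Submission
  imports Defs
begin

text \<open>
  (1) Arithmetic of a \<open>|\<cdot>|\<^sub>1\<close>-maximal \<open>\<beta>\<close>: because \<open>(q-1) | n\<close>, \<open>|\<beta>|\<^sub>1 \<equiv> 2(q-1) \<equiv> 0\<close>
  and \<open>l(|\<beta>|\<^sub>1) \<le> 2(q-1) < l(n)\<close>, we get \<open>|\<beta>|\<^sub>1 + (q-1) \<le> n\<close>; as merging \<open>q\<close> equal entries or
  raising a zero entry gains exactly \<open>q - 1\<close>, \<open>\<beta>\<close> has no zero entry and repeats no value
  \<open>q\<close> times.  So the exponents of \<open>\<beta>\<close> are the base-\<open>q\<close> digits of \<open>|\<beta>|\<^sub>1\<close>.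

  (2) A comparison lemma for power sums (\<open>pow_sum_comparison\<close>), proved by comparing
  base-\<open>q\<close> expansions above and below a cut \<open>p\<close>: any ordered \<open>\<gamma>\<close> in \<open>M\<^sub>2(n)\<close> has
  \<open>|\<gamma>|\<^sub>2\<close> = a power sum with at most \<open>q - 1\<close> exponents of each parity and \<open>\<le> |\<beta>|\<^sub>1\<close>,
  so it is bounded by the part of \<open>|\<beta>|\<^sub>1\<close> above \<open>p\<close> plus the best completion by
  exponents \<open>p\<close> and \<open>p - 1\<close> of the right parities.

  (3) That completion is exactly \<open>|\<mu>|\<^sub>1 = |\<mu>|\<^sub>2\<close> for the lowered tuple \<open>\<mu>\<close>, which is ordered
  with \<open>q - 1\<close> even entries (\<open>lowered_maximal2\<close>).  Parts (ii) and (iii) instantiate this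
  with the first resp. second block lowered; part (i) only needs \<open>|\<gamma>|\<^sub>2 \<le> |\<gamma>|\<^sub>1\<close>.
\<close>

definition pow_sum :: "nat \<Rightarrow> (nat \<Rightarrow> nat) \<Rightarrow> nat set \<Rightarrow> nat" where
  "pow_sum q f A = (\<Sum>i\<in>A. q ^ f i)"

text \<open>\<open>f\<close> takes every value fewer than \<open>q\<close> times on \<open>A\<close>; then the multiset of exponents of
  \<open>pow_sum q f A\<close> is exactly its base-\<open>q\<close> digit expansion.\<close>
definition few_repeats :: "nat \<Rightarrow> (nat \<Rightarrow> nat) \<Rightarrow> nat set \<Rightarrow> bool" where
  "few_repeats q f A \<longleftrightarrow> (\<forall>s. card {i\<in>A. f i = s} \<le> q - 1)"

declare digit_sum.simps[simp del]

lemma digit_sum_0 [simp]: "digit_sum q 0 = 0"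
  by (simp add: digit_sum.simps)

lemma digit_sum_step: "q \<ge> 2 \<Longrightarrow> digit_sum q n = n mod q + digit_sum q (n div q)"
  by (cases "n = 0") (simp, simp add: digit_sum.simps)

text \<open>Adding \<open>1\<close> raises the digit sum by at most \<open>1\<close> (carries only lower it).\<close>
lemma digit_sum_Suc_le:
  assumes q: "q \<ge> 2" shows "digit_sum q (Suc x) \<le> digit_sum q x + 1"
proof (induction x rule: less_induct)
  case (less x)
  show ?case
  proof (cases "Suc (x mod q) = q")
    case False
    then show ?thesis using digit_sum_step[OF q, of "Suc x"] digit_sum_step[OF q, of x]
      by (simp add: mod_Suc div_Suc)
  next
    case True
    then have "x div q < x" using q by (cases x) auto
    from less[OF this] show ?thesis
      using True digit_sum_step[OF q, of "Suc x"] digit_sum_step[OF q, of x]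
      by (simp add: mod_Suc div_Suc)
  qed
qed

lemma digit_sum_add_power_le:
  assumes q: "q \<ge> 2" shows "digit_sum q (x + q ^ k) \<le> digit_sum q x + 1"
proof (induction k arbitrary: x)
  case 0
  then show ?case using digit_sum_Suc_le[OF q] by simp
next
  case (Suc k)
  have "(x + q ^ Suc k) div q = x div q + q ^ k" using q by simp
  then show ?case using Suc[of "x div q"] digit_sum_step[OF q, of "x + q ^ Suc k"] digit_sum_step[OF q, of x]
    by simp
qed

lemma digit_sum_pow_sum_le:
  assumes q: "q \<ge> 2" and fin: "finite A" shows "digit_sum q (pow_sum q f A) \<le> card A"
  using fin unfolding pow_sum_def
proof (induction A rule: finite_induct)
  case (insert x A)
  then show ?case using digit_sum_add_power_le[OF q, of "\<Sum>i\<in>A. q ^ f i" "f x"]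
    by (simp add: add.commute)
qed simp

text \<open>Since \<open>q \<equiv> 1 (mod q - 1)\<close>, a sum of \<open>k\<close> powers of \<open>q\<close> is \<open>\<equiv> k (mod q - 1)\<close>.\<close>
lemma pow_sum_mod_pred:
  assumes q: "q \<ge> 2" shows "pow_sum q f A mod (q - 1) = card A mod (q - 1)"
proof -
  have "q mod (q - 1) = 1 mod (q - 1)"
    using q mod_add_self2[of 1 "q - 1"] by simp
  then have pow: "q ^ k mod (q - 1) = 1 mod (q - 1)" for k
    by (metis power_mod power_one)
  have "pow_sum q f A mod (q - 1) = (\<Sum>i\<in>A. q ^ f i mod (q - 1)) mod (q - 1)"
    unfolding pow_sum_def by (rule mod_sum_eq[symmetric])
  also have "\<dots> = (\<Sum>i\<in>A. 1 mod (q - 1)) mod (q - 1)" using pow by simp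
  also have "\<dots> = card A mod (q - 1)" by (simp add: mod_sum_eq)
  finally show ?thesis .
qed

lemma dvd_gap: "(P::nat) dvd a \<Longrightarrow> P dvd b \<Longrightarrow> b < a \<Longrightarrow> b + P \<le> a"
  by (elim dvdE) (metis add.commute mult_Suc_right mult_le_mono2 mult_less_cancel1 Suc_leI)

lemma pow_sum_split:
  assumes "finite A"
  shows "pow_sum q f A = pow_sum q f {i\<in>A. P i} + pow_sum q f {i\<in>A. \<not> P i}"
proof -
  have "A = {i\<in>A. P i} \<union> {i\<in>A. \<not> P i}" by auto
  then have "pow_sum q f A = pow_sum q f ({i\<in>A. P i} \<union> {i\<in>A. \<not> P i})" by simp
  also have "\<dots> = pow_sum q f {i\<in>A. P i} + pow_sum q f {i\<in>A. \<not> P i}"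
    unfolding pow_sum_def using assms by (intro sum.union_disjoint) auto
  finally show ?thesis .
qed

lemma pow_sum_level: "pow_sum q f {i\<in>A. f i = t} = card {i\<in>A. f i = t} * q ^ t"
  unfolding pow_sum_def by simp

lemma few_repeats_subset:
  assumes few: "few_repeats q f A" and fin: "finite A" and sub: "B \<subseteq> A"
  shows "few_repeats q f B"
proof -
  have "card {i\<in>B. f i = s} \<le> card {i\<in>A. f i = s}" for s
    using sub fin by (intro card_mono) auto
  then show ?thesis using few unfolding few_repeats_def by (meson le_trans)
qed

text \<open>With few repeats, the terms with exponent below \<open>t\<close> sum to less than \<open>q ^ t\<close>
  (at most \<open>q - 1\<close> copies of each smaller power: a base-\<open>q\<close> number with \<open>t\<close> digits).\<close>
lemma pow_sum_below_lt:
  assumes q: "q \<ge> 2" and fin: "finite A" and few: "few_repeats q f A"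
  shows "pow_sum q f {i\<in>A. f i < t} < q ^ t"
proof (induction t)
  case (Suc t)
  have "{i\<in>{i\<in>A. f i < Suc t}. f i < t} = {i\<in>A. f i < t}"
    and "{i\<in>{i\<in>A. f i < Suc t}. \<not> f i < t} = {i\<in>A. f i = t}" by auto
  then have "pow_sum q f {i\<in>A. f i < Suc t} = pow_sum q f {i\<in>A. f i < t} + card {i\<in>A. f i = t} * q ^ t"
    using pow_sum_split[of "{i\<in>A. f i < Suc t}" q f "\<lambda>i. f i < t"] fin pow_sum_level by simp
  also have "\<dots> < q ^ t + (q - 1) * q ^ t"
    using Suc few unfolding few_repeats_def by (intro add_less_le_mono mult_le_mono1) auto
  also have "q ^ t + (q - 1) * q ^ t = q ^ Suc t" using q by (cases q) auto
  finally show ?case .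
qed (simp add: pow_sum_def)

lemma pow_sum_above_dvd: "q ^ Suc p dvd pow_sum q f {i\<in>A. p < f i}"
  unfolding pow_sum_def by (rule dvd_sum) (auto intro: le_imp_power_dvd simp del: power_Suc)

lemma digit_of_pow_sum:
  assumes q: "q \<ge> 2" and fin: "finite A" and few: "few_repeats q f A"
  shows "pow_sum q f A div q ^ s mod q = card {i\<in>A. f i = s}"
proof -
  define L where "L = pow_sum q f {i\<in>A. f i < s}"
  define C where "C = card {i\<in>A. f i = s}"
  define H where "H = pow_sum q f {i\<in>A. s < f i}"
  have "{i\<in>{i\<in>A. \<not> f i < s}. f i = s} = {i\<in>A. f i = s}"
    and "{i\<in>{i\<in>A. \<not> f i < s}. \<not> f i = s} = {i\<in>A. s < f i}" by auto
  then have "pow_sum q f {i\<in>A. \<not> f i < s} = pow_sum q f {i\<in>A. f i = s} + H"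
    using pow_sum_split[of "{i\<in>A. \<not> f i < s}" q f "\<lambda>i. f i = s"] fin unfolding H_def by simp
  then have eq: "pow_sum q f A = L + C * q ^ s + H"
    using pow_sum_split[OF fin, of q f "\<lambda>i. f i < s"] pow_sum_level unfolding L_def C_def by simp
  obtain h where h: "H = q ^ Suc s * h" using pow_sum_above_dvd unfolding H_def by blast
  have "L < q ^ s" unfolding L_def by (rule pow_sum_below_lt[OF q fin few])
  moreover have "C \<le> q - 1" using few unfolding few_repeats_def C_def by blast
  with q have "C < q" by linarith
  moreover have "pow_sum q f A = L + q ^ s * (C + q * h)" using eq h by (simp add: algebra_simps)
  ultimately show ?thesis unfolding C_def by simp
qed

lemma card_by_levels:
  fixes f :: "'a \<Rightarrow> nat"
  assumes fin: "finite A" and bd: "\<forall>i\<in>A. f i \<le> N"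
  shows "card {i\<in>A. Q (f i)} = (\<Sum>s\<in>{s. s \<le> N \<and> Q s}. card {i\<in>A. f i = s})"
proof -
  have "{i\<in>A. Q (f i)} = (\<Union>s\<in>{s. s \<le> N \<and> Q s}. {i\<in>A. f i = s})" using bd by auto
  moreover have "finite {s. s \<le> N \<and> Q s}" by (rule finite_subset[of _ "{..N}"]) auto
  ultimately show ?thesis using fin by (auto intro: card_UN_disjoint)
qed

lemma exponent_le_pow_sum:
  assumes q: "q \<ge> 2" and fin: "finite A" and i: "i \<in> A" shows "f i \<le> pow_sum q f A"
proof -
  have "f i < q ^ f i" using q by (simp add: power_gt_expt)
  also have "q ^ f i \<le> pow_sum q f A" unfolding pow_sum_def by (rule member_le_sum[OF i _ fin]) simp
  finally show ?thesis by simp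
qed

text \<open>Uniqueness of base-\<open>q\<close> expansions: two power sums with few repeats that are equal
  have the same exponent multiset, hence agree on every count of exponents.\<close>
lemma equal_pow_sums_equal_counts:
  assumes q: "q \<ge> 2" and finA: "finite A" and finB: "finite B"
    and fewA: "few_repeats q f A" and fewB: "few_repeats q g B"
    and eq: "pow_sum q f A = pow_sum q g B"
  shows "card {i\<in>A. Q (f i)} = card {j\<in>B. Q (g j)}"
proof -
  define N where "N = pow_sum q f A"
  have levels: "card {i\<in>A. f i = s} = card {j\<in>B. g j = s}" for s
    using digit_of_pow_sum[OF q finA fewA, of s] digit_of_pow_sum[OF q finB fewB, of s] eq by simp
  have "\<forall>i\<in>A. f i \<le> N" "\<forall>j\<in>B. g j \<le> N"
    using exponent_le_pow_sum[OF q finA, of _ f] exponent_le_pow_sum[OF q finB, of _ g] eq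
    unfolding N_def by auto
  then show ?thesis using card_by_levels[OF finA, of f N Q] card_by_levels[OF finB, of g N Q] levels
    by simp
qed

lemma few_repeats_by_parity:
  assumes fin: "finite J"
    and same: "card {j\<in>J. even (g j) = even p} \<le> q - 1"
    and other: "card {j\<in>J. even (g j) \<noteq> even p} \<le> q - 1"
  shows "few_repeats q g J"
  unfolding few_repeats_def
proof
  fix s
  have "card {j\<in>J. g j = s} \<le> card {j\<in>J. even (g j) = even p}" if "even s = even p"
    using that fin by (intro card_mono) auto
  moreover have "card {j\<in>J. g j = s} \<le> card {j\<in>J. even (g j) \<noteq> even p}" if "even s \<noteq> even p"
    using that fin by (intro card_mono) auto
  ultimately show "card {j\<in>J. g j = s} \<le> q - 1" using same other by fastforce
qed

text \<open>Suppose the exponents of \<open>g\<close> on \<open>J\<close> contain at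
  most \<open>q - 1\<close> of each parity, and above \<open>p\<close> they leave room for exactly \<open>c\<close> more of the
  parity of \<open>p\<close> and \<open>r\<close> more of the other parity.  Then the terms with exponent \<open>\<le> p\<close>
  sum to at most \<open>c * q ^ p + r * q ^ (p - 1)\<close>: either fewer than \<open>c\<close> of them equal \<open>p\<close>,
  or exactly \<open>c\<close> do and all smaller ones have the other parity, so there are at most \<open>r\<close>
  of them, each at most \<open>q ^ (p - 1)\<close>.\<close>
lemma low_part_bound:
  fixes q p c r :: nat and g :: "nat \<Rightarrow> nat"
  assumes q: "q \<ge> 2" and fin: "finite J" and p: "p \<ge> 1"
    and same: "card {j\<in>J. even (g j) = even p} \<le> q - 1"
    and other: "card {j\<in>J. even (g j) \<noteq> even p} \<le> q - 1"
    and hc: "card {j\<in>J. p < g j \<and> even (g j) = even p} + c = q - 1"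
    and hr: "r + card {j\<in>J. p < g j \<and> even (g j) \<noteq> even p} = q - 1"
  shows "pow_sum q g {j\<in>J. g j \<le> p} \<le> c * q ^ p + r * q ^ (p - 1)"
proof -
  define cp where "cp = card {j\<in>J. g j = p}"
  define low where "low = pow_sum q g {j\<in>J. g j < p}"
  have "{j\<in>{j\<in>J. g j \<le> p}. g j < p} = {j\<in>J. g j < p}"
    and "{j\<in>{j\<in>J. g j \<le> p}. \<not> g j < p} = {j\<in>J. g j = p}" by auto
  then have split: "pow_sum q g {j\<in>J. g j \<le> p} = low + cp * q ^ p"
    using pow_sum_split[of "{j\<in>J. g j \<le> p}" q g "\<lambda>j. g j < p"] fin pow_sum_level
    unfolding low_def cp_def by simp
  define high_same where "high_same = {j\<in>J. p < g j \<and> even (g j) = even p}"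
  define low_same where "low_same = {j\<in>J. g j < p \<and> even (g j) = even p}"
  have "card (high_same \<union> {j\<in>J. g j = p} \<union> low_same) \<le> card {j\<in>J. even (g j) = even p}"
    unfolding high_same_def low_same_def by (rule card_mono) (use fin in auto)
  moreover have "card (high_same \<union> {j\<in>J. g j = p} \<union> low_same) = card high_same + cp + card low_same"
    using fin unfolding high_same_def low_same_def cp_def by (simp add: card_Un_disjoint disjoint_iff)
  ultimately have same_count: "card high_same + cp + card low_same \<le> q - 1" using same by linarith
  show ?thesis
  proof (cases "cp < c")
    case True
    have "low < q ^ p" unfolding low_def
      by (rule pow_sum_below_lt[OF q fin few_repeats_by_parity[OF fin same other]])
    moreover have "(cp + 1) * q ^ p \<le> c * q ^ p" using True by (intro mult_le_mono1) simp
    ultimately show ?thesis using split by simp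
  next
    case False
    with hc same_count have "cp = c" and "card low_same = 0" unfolding high_same_def by linarith+
    then have "low_same = {}" using fin unfolding low_same_def by simp
    define high_other where "high_other = {j\<in>J. p < g j \<and> even (g j) \<noteq> even p}"
    have "card (high_other \<union> {j\<in>J. g j < p}) \<le> card {j\<in>J. even (g j) \<noteq> even p}"
      using \<open>low_same = {}\<close> unfolding high_other_def low_same_def by (intro card_mono) (use fin in auto)
    moreover have "card (high_other \<union> {j\<in>J. g j < p}) = card high_other + card {j\<in>J. g j < p}"
      using fin unfolding high_other_def by (simp add: card_Un_disjoint disjoint_iff)
    ultimately have few_low: "card {j\<in>J. g j < p} \<le> r" using hr other unfolding high_other_def by linarith
    have "q ^ g j \<le> q ^ (p - 1)" if "j \<in> {j\<in>J. g j < p}" for j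
      using that q by (intro power_increasing) auto
    then have "low \<le> card {j\<in>J. g j < p} * q ^ (p - 1)"
      using sum_bounded_above[of "{j\<in>J. g j < p}" "\<lambda>j. q ^ g j" "q ^ (p - 1)"]
      unfolding low_def pow_sum_def by simp
    with few_low have "low \<le> r * q ^ (p - 1)" by (meson le_trans mult_le_mono1)
    then show ?thesis using split \<open>cp = c\<close> by simp
  qed
qed

text \<open>Comparing
  the parts above \<open>p\<close> (both multiples of \<open>q ^ Suc p\<close>): if \<open>g\<close>'s is smaller the bound is
  immediate, it cannot be larger, and if they are equal the exponent multisets above \<open>p\<close>
  coincide and \<open>low_part_bound\<close> applies.\<close>
lemma pow_sum_comparison:
  fixes q p c r :: nat and \<beta> g :: "nat \<Rightarrow> nat"
  assumes q: "q \<ge> 2" and finI: "finite I" and finJ: "finite J" and few: "few_repeats q \<beta> I"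
    and same: "card {j\<in>J. even (g j) = even p} \<le> q - 1"
    and other: "card {j\<in>J. even (g j) \<noteq> even p} \<le> q - 1"
    and le: "pow_sum q g J \<le> pow_sum q \<beta> I" and p: "p \<ge> 1"
    and hc: "card {i\<in>I. p < \<beta> i \<and> even (\<beta> i) = even p} + c = q - 1"
    and hr: "r + card {i\<in>I. p < \<beta> i \<and> even (\<beta> i) \<noteq> even p} = q - 1"
  shows "pow_sum q g J \<le> pow_sum q \<beta> {i\<in>I. p < \<beta> i} + c * q ^ p + r * q ^ (p - 1)"
proof -
  define a where "a = pow_sum q \<beta> {i\<in>I. p < \<beta> i}"
  define b where "b = pow_sum q g {j\<in>J. p < g j}"
  have fewJ: "few_repeats q g J" by (rule few_repeats_by_parity[OF finJ same other])
  have \<beta>_split: "pow_sum q \<beta> I = a + pow_sum q \<beta> {i\<in>I. \<beta> i \<le> p}"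
    and g_split: "pow_sum q g J = b + pow_sum q g {j\<in>J. g j \<le> p}"
    using pow_sum_split[OF finI, of q \<beta> "\<lambda>i. p < \<beta> i"] pow_sum_split[OF finJ, of q g "\<lambda>j. p < g j"]
    unfolding a_def b_def by (simp_all add: not_less)
  have \<beta>_low: "pow_sum q \<beta> {i\<in>I. \<beta> i \<le> p} < q ^ Suc p"
    and g_low: "pow_sum q g {j\<in>J. g j \<le> p} < q ^ Suc p"
    using pow_sum_below_lt[OF q finI few, of "Suc p"] pow_sum_below_lt[OF q finJ fewJ, of "Suc p"]
    by (simp_all add: less_Suc_eq_le)
  have dvd: "q ^ Suc p dvd a" "q ^ Suc p dvd b"
    unfolding a_def b_def by (rule pow_sum_above_dvd)+
  consider "b < a" | "a < b" | "a = b" by linarith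
  then show ?thesis
  proof cases
    case 1
    then show ?thesis using dvd_gap[OF dvd(1,2) 1] g_split g_low unfolding a_def by linarith
  next
    case 2
    then show ?thesis using dvd_gap[OF dvd(2,1) 2] \<beta>_split \<beta>_low g_split le by linarith
  next
    case 3
    have "card {i\<in>{i\<in>I. p < \<beta> i}. Q (\<beta> i)} = card {j\<in>{j\<in>J. p < g j}. Q (g j)}" for Q
      using 3 few_repeats_subset[OF few finI] few_repeats_subset[OF fewJ finJ] finI finJ
      unfolding a_def b_def by (intro equal_pow_sums_equal_counts[OF q]) auto
    then have counts: "card {i\<in>I. p < \<beta> i \<and> Q (\<beta> i)} = card {j\<in>J. p < g j \<and> Q (g j)}" for Q
      by simp
    have "card {j\<in>J. p < g j \<and> even (g j) = even p} + c = q - 1"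
      using hc counts[of "\<lambda>x. even x = even p"] by simp
    moreover have "r + card {j\<in>J. p < g j \<and> even (g j) \<noteq> even p} = q - 1"
      using hr counts[of "\<lambda>x. even x \<noteq> even p"] by simp
    ultimately have "pow_sum q g {j\<in>J. g j \<le> p} \<le> c * q ^ p + r * q ^ (p - 1)"
      by (rule low_part_bound[OF q finJ p same other])
    then show ?thesis using 3 g_split unfolding a_def b_def by linarith
  qed
qed

lemma norm1_pow_sum: "norm1 q \<beta> = pow_sum q \<beta> {1..2*(q-1)}"
  unfolding norm1_def pow_sum_def by simp

lemma merge_equal_entries:
  assumes fin: "finite I" and Q: "Q \<subseteq> I" "card Q = q" and i0: "i0 \<in> Q"
    and const: "\<forall>i\<in>Q. \<beta> i = s"
  defines "\<gamma> \<equiv> \<lambda>i. if i = i0 then Suc s else if i \<in> Q then 0 else \<beta> i"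
  shows "pow_sum q \<gamma> I = pow_sum q \<beta> I + (q - 1)"
proof -
  have finQ: "finite Q" using fin Q(1) finite_subset by blast
  have rest: "pow_sum q \<gamma> (I - Q) = pow_sum q \<beta> (I - Q)"
    using i0 unfolding pow_sum_def \<gamma>_def by (intro sum.cong) auto
  have "pow_sum q \<gamma> Q = q ^ \<gamma> i0 + pow_sum q \<gamma> (Q - {i0})"
    unfolding pow_sum_def by (rule sum.remove[OF finQ i0])
  also have "pow_sum q \<gamma> (Q - {i0}) = (\<Sum>i\<in>Q - {i0}. 1)"
    unfolding pow_sum_def \<gamma>_def by (intro sum.cong) auto
  finally have "pow_sum q \<gamma> Q = q ^ Suc s + (q - 1)" using Q i0 finQ by (simp add: \<gamma>_def)
  moreover have "pow_sum q \<beta> Q = q ^ Suc s"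
    using const Q(2) unfolding pow_sum_def by simp
  moreover have "pow_sum q f I = pow_sum q f (I - Q) + pow_sum q f Q" for f
    unfolding pow_sum_def by (rule sum.subset_diff[OF Q(1) fin])
  ultimately show ?thesis using rest by simp
qed

lemma raise_zero_entry:
  assumes fin: "finite I" and i0: "i0 \<in> I" "\<beta> i0 = 0" and q: "q \<ge> 1"
  shows "pow_sum q (\<beta>(i0 := 1)) I = pow_sum q \<beta> I + (q - 1)"
proof -
  have "pow_sum q f I = q ^ f i0 + pow_sum q f (I - {i0})" for f
    unfolding pow_sum_def by (rule sum.remove[OF fin i0(1)])
  moreover have "pow_sum q (\<beta>(i0 := 1)) (I - {i0}) = pow_sum q \<beta> (I - {i0})"
    unfolding pow_sum_def by (intro sum.cong) auto
  ultimately show ?thesis using i0 q by simp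
qed

text \<open>For \<open>n\<close> as in the theorem, a maximal \<open>\<beta>\<close> stays at least \<open>q - 1\<close> below \<open>n\<close>:
  \<open>|\<beta>|\<^sub>1\<close> is a multiple of \<open>q - 1\<close> with digit sum at most \<open>2(q - 1) < l(n)\<close>, so it differs from \<open>n\<close>.\<close>
lemma maximal1_gap:
  assumes q: "q \<ge> 2" and hdvd: "(q - 1) dvd n" and hl: "digit_sum q n \<ge> 3 * (q - 1)"
    and hmax: "maximal1 q n \<beta>"
  shows "norm1 q \<beta> + (q - 1) \<le> n"
proof -
  have le: "norm1 q \<beta> \<le> n" using hmax unfolding maximal1_def inM2_def by simp
  have "norm1 q \<beta> mod (q - 1) = 2 * (q - 1) mod (q - 1)"
    unfolding norm1_pow_sum using pow_sum_mod_pred[OF q] by simp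
  then have dvd: "(q - 1) dvd norm1 q \<beta>" by (simp add: mod_eq_0_iff_dvd)
  have "digit_sum q (norm1 q \<beta>) \<le> 2 * (q - 1)"
    unfolding norm1_pow_sum using digit_sum_pow_sum_le[OF q, of "{1..2*(q-1)}" \<beta>] by simp
  then have "norm1 q \<beta> \<noteq> n" using hl q by auto
  with le dvd_gap[OF hdvd dvd] show ?thesis by simp
qed

lemma maximal1_no_gain:
  assumes q: "q \<ge> 2" and gap: "norm1 q \<beta> + (q - 1) \<le> n" and hmax: "maximal1 q n \<beta>"
  shows "norm1 q \<gamma> \<noteq> norm1 q \<beta> + (q - 1)"
proof
  assume eq: "norm1 q \<gamma> = norm1 q \<beta> + (q - 1)"
  then have "norm1 q \<gamma> \<le> n" using gap by simp
  then have "norm1 q \<gamma> \<le> norm1 q \<beta>" using hmax unfolding maximal1_def inM2_def by blast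
  with eq q show False by simp
qed

text \<open>Hence a maximal tuple repeats no exponent \<open>q\<close> times (else \<open>merge_equal_entries\<close> improves it) \<dots>\<close>
lemma maximal1_few_repeats:
  assumes q: "q \<ge> 2" and gap: "norm1 q \<beta> + (q - 1) \<le> n" and hmax: "maximal1 q n \<beta>"
  shows "few_repeats q \<beta> {1..2*(q-1)}"
  unfolding few_repeats_def
proof (rule ccontr)
  define I where "I = {1..2*(q-1)}"
  assume "\<not> (\<forall>s. card {i\<in>{1..2*(q-1)}. \<beta> i = s} \<le> q - 1)"
  then obtain s where "q - 1 < card {i\<in>I. \<beta> i = s}" unfolding I_def by (auto simp: not_le)
  then have "q \<le> card {i\<in>I. \<beta> i = s}" by linarith
  then obtain Q where Q: "Q \<subseteq> {i\<in>I. \<beta> i = s}" "card Q = q"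
    by (meson obtain_subset_with_card_n)
  then obtain i0 where "i0 \<in> Q" using q by fastforce
  then have "norm1 q (\<lambda>i. if i = i0 then Suc s else if i \<in> Q then 0 else \<beta> i) = norm1 q \<beta> + (q - 1)"
    using merge_equal_entries[of I Q q i0 \<beta> s] Q unfolding norm1_pow_sum I_def by fastforce
  then show False using maximal1_no_gain[OF q gap hmax] by blast
qed

text \<open>\<dots> and has no zero entry (else \<open>raise_zero_entry\<close> improves it).\<close>
lemma maximal1_nonzero:
  assumes q: "q \<ge> 2" and gap: "norm1 q \<beta> + (q - 1) \<le> n" and hmax: "maximal1 q n \<beta>"
  shows "\<forall>i\<in>{1..2*(q-1)}. \<beta> i \<noteq> 0"
proof (rule ccontr)
  assume "\<not> ?thesis"
  then obtain i0 where "i0 \<in> {1..2*(q-1)}" "\<beta> i0 = 0" by blast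
  then have "norm1 q (\<beta>(i0 := 1)) = norm1 q \<beta> + (q - 1)"
    using raise_zero_entry[of "{1..2*(q-1)}" i0 \<beta> q] q unfolding norm1_pow_sum by simp
  then show False using maximal1_no_gain[OF q gap hmax] by blast
qed

lemma num_even_ordered_with:
  assumes o: "ordered_with q \<beta> e" shows "num_even q \<beta> = e"
proof -
  have "{i\<in>{1..2*(q-1)}. even (\<beta> i)} = {1..e}"
    using o unfolding ordered_with_def by (auto simp: not_less_eq_eq[symmetric])
  then show ?thesis unfolding num_even_def by simp
qed

lemma norm2_as_pow_sum:
  assumes o: "ordered q \<gamma>"
  shows "\<exists>J \<subseteq> {1..2*(q-1)}. norm2 q \<gamma> = pow_sum q \<gamma> J
     \<and> card {j\<in>J. even (\<gamma> j)} \<le> q - 1 \<and> card {j\<in>J. odd (\<gamma> j)} \<le> q - 1"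
proof -
  obtain e where oe: "ordered_with q \<gamma> e" using o unfolding ordered_def by blast
  define B1 where "B1 = {1..min e (q-1)}"
  define B2 where "B2 = {max q (e+1)..2*(q-1)}"
  have "norm2 q \<gamma> = pow_sum q \<gamma> (B1 \<union> B2)"
    unfolding norm2_def Let_def num_even_ordered_with[OF oe] B1_def B2_def pow_sum_def
    by (rule sum.union_disjoint[symmetric]) auto
  moreover have "card {j\<in>B1 \<union> B2. even (\<gamma> j)} \<le> card B1"
    using oe unfolding ordered_with_def B1_def B2_def by (intro card_mono) auto
  moreover have "card {j\<in>B1 \<union> B2. odd (\<gamma> j)} \<le> card B2"
    using oe unfolding ordered_with_def B1_def B2_def by (intro card_mono) auto
  moreover have "card B1 \<le> q - 1" "card B2 \<le> q - 1" unfolding B1_def B2_def by auto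
  moreover have "B1 \<union> B2 \<subseteq> {1..2*(q-1)}" unfolding B1_def B2_def by auto
  ultimately show ?thesis by (meson le_trans)
qed

lemma norm2_le_norm1: "ordered q \<gamma> \<Longrightarrow> norm2 q \<gamma> \<le> norm1 q \<gamma>"
  using norm2_as_pow_sum[of q \<gamma>] unfolding norm1_pow_sum pow_sum_def
  by (metis finite_atLeastAtMost sum_mono2 zero_le)

lemma norm2_eq_norm1:
  assumes q: "q \<ge> 2" and o: "ordered_with q \<mu> (q - 1)" shows "norm2 q \<mu> = norm1 q \<mu>"
proof -
  have "norm2 q \<mu> = pow_sum q \<mu> ({1..q-1} \<union> {q..2*(q-1)})"
    unfolding norm2_def Let_def num_even_ordered_with[OF o] pow_sum_def using q
    by (subst sum.union_disjoint) auto
  also have "{1..q-1} \<union> {q..2*(q-1)} = {1..2*(q-1)}" using q by auto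
  finally show ?thesis unfolding norm1_pow_sum .
qed

text \<open>The modification in parts (ii) and (iii): every entry in the block \<open>L\<close> that is at most
  \<open>p\<close> is replaced by \<open>p - 1\<close>.\<close>
definition lowered :: "nat set \<Rightarrow> nat \<Rightarrow> (nat \<Rightarrow> nat) \<Rightarrow> nat \<Rightarrow> nat" where
  "lowered L p \<beta> j = (if j \<in> L \<and> \<beta> j \<le> p then p - 1 else \<beta> j)"

text \<open>Value of the lowered tuple when the index set splits into blocks \<open>K\<close> and \<open>L\<close>, all entries
  of \<open>K\<close> are at least \<open>p\<close>, and some entry of \<open>L\<close> equals \<open>p\<close>: the part above \<open>p\<close> is
  untouched, and since \<open>L\<close> has fewer than \<open>q\<close> entries the value does not increase.\<close>
lemma pow_sum_lowered:
  assumes fin: "finite I" and blocks: "I = K \<union> L" "K \<inter> L = {}" and cardL: "card L \<le> q - 1"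
    and i0: "i0 \<in> L" "\<beta> i0 = p" and p: "p \<ge> 1" and K: "\<forall>i\<in>K. p \<le> \<beta> i"
  shows "pow_sum q (lowered L p \<beta>) I
      = pow_sum q \<beta> {i\<in>I. p < \<beta> i} + card {i\<in>K. \<beta> i = p} * q ^ p + card {i\<in>L. \<beta> i \<le> p} * q ^ (p - 1)"
    and "pow_sum q (lowered L p \<beta>) I \<le> pow_sum q \<beta> I"
proof -
  define K_at_p where "K_at_p = {i\<in>K. \<beta> i = p}"
  define L_below where "L_below = {i\<in>L. \<beta> i \<le> p}"
  have fin_parts: "finite K_at_p" "finite L_below" using fin blocks unfolding K_at_p_def L_below_def by auto
  have low: "{i\<in>I. \<not> p < \<beta> i} = K_at_p \<union> L_below" "K_at_p \<inter> L_below = {}"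
    using blocks K unfolding K_at_p_def L_below_def by force+
  have split: "pow_sum q f I = pow_sum q f {i\<in>I. p < \<beta> i} + pow_sum q f K_at_p + pow_sum q f L_below" for f
    using pow_sum_split[OF fin, of q f "\<lambda>i. p < \<beta> i"] low fin_parts
    unfolding pow_sum_def by (simp add: sum.union_disjoint)
  have high: "pow_sum q (lowered L p \<beta>) {i\<in>I. p < \<beta> i} = pow_sum q \<beta> {i\<in>I. p < \<beta> i}"
    unfolding pow_sum_def lowered_def by (intro sum.cong) auto
  have mid: "pow_sum q (lowered L p \<beta>) K_at_p = pow_sum q \<beta> K_at_p"
    using blocks(2) unfolding pow_sum_def lowered_def K_at_p_def by (intro sum.cong) auto
  have at_p: "pow_sum q \<beta> K_at_p = card K_at_p * q ^ p" unfolding pow_sum_def K_at_p_def by simp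
  have bottom: "pow_sum q (lowered L p \<beta>) L_below = card L_below * q ^ (p - 1)"
    unfolding pow_sum_def lowered_def L_below_def by simp
  show "pow_sum q (lowered L p \<beta>) I = pow_sum q \<beta> {i\<in>I. p < \<beta> i} + card K_at_p * q ^ p + card L_below * q ^ (p - 1)"
    using split high mid at_p bottom by simp
  have "card L_below \<le> card L" using fin blocks unfolding L_below_def by (intro card_mono) auto
  with cardL have "card L_below \<le> q - 1" by simp
  then have "card L_below * q ^ (p - 1) \<le> (q - 1) * q ^ (p - 1)" by (rule mult_le_mono1)
  also have "\<dots> \<le> q ^ p" using p by (cases p) auto
  also have "q ^ p \<le> pow_sum q \<beta> L_below"
    using member_le_sum[of i0 L_below "\<lambda>i. q ^ \<beta> i"] i0 fin_parts unfolding pow_sum_def L_below_def by simp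
  finally show "pow_sum q (lowered L p \<beta>) I \<le> pow_sum q \<beta> I"
    using split high mid at_p bottom by simp
qed

lemma card_partition:
  "finite U \<Longrightarrow> X \<union> Y = U \<Longrightarrow> X \<inter> Y = {} \<Longrightarrow> card X + card Y = card U"
  using card_Un_disjoint[of X Y] by auto

lemma lowered_parity_counts:
  fixes p :: nat and \<beta> :: "nat \<Rightarrow> nat"
  assumes fin: "finite I" and blocks: "I = K \<union> L" "K \<inter> L = {}"
    and cards: "card K = q - 1" "card L = q - 1"
    and K: "\<forall>i\<in>K. p \<le> \<beta> i \<and> even (\<beta> i) = even p"
    and L: "\<forall>i\<in>L. p < \<beta> i \<longrightarrow> even (\<beta> i) \<noteq> even p"
  shows "card {i\<in>I. p < \<beta> i \<and> even (\<beta> i) = even p} + card {i\<in>K. \<beta> i = p} = q - 1"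
    and "card {i\<in>L. \<beta> i \<le> p} + card {i\<in>I. p < \<beta> i \<and> even (\<beta> i) \<noteq> even p} = q - 1"
proof -
  have finKL: "finite K" "finite L" using fin blocks by auto
  have "{i\<in>I. p < \<beta> i \<and> even (\<beta> i) = even p} \<union> {i\<in>K. \<beta> i = p} = K"
  proof (intro equalityI subsetI)
    fix i assume "i \<in> K"
    then show "i \<in> {i\<in>I. p < \<beta> i \<and> even (\<beta> i) = even p} \<union> {i\<in>K. \<beta> i = p}"
      using K blocks(1) le_neq_implies_less by auto
  qed (use blocks L in auto)
  moreover have "{i\<in>I. p < \<beta> i \<and> even (\<beta> i) = even p} \<inter> {i\<in>K. \<beta> i = p} = {}" by auto
  ultimately show "card {i\<in>I. p < \<beta> i \<and> even (\<beta> i) = even p} + card {i\<in>K. \<beta> i = p} = q - 1"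
    using card_partition[OF finKL(1)] cards(1) by simp
  have "{i\<in>L. \<beta> i \<le> p} \<union> {i\<in>I. p < \<beta> i \<and> even (\<beta> i) \<noteq> even p} = L"
    using blocks K L by (auto simp: not_le)
  moreover have "{i\<in>L. \<beta> i \<le> p} \<inter> {i\<in>I. p < \<beta> i \<and> even (\<beta> i) \<noteq> even p} = {}" by auto
  ultimately show "card {i\<in>L. \<beta> i \<le> p} + card {i\<in>I. p < \<beta> i \<and> even (\<beta> i) \<noteq> even p} = q - 1"
    using card_partition[OF finKL(2)] cards(2) by simp
qed

lemma lowered_maximal2:
  fixes q n p i0 :: nat and \<beta> :: "nat \<Rightarrow> nat" and K L :: "nat set"
  assumes q: "q \<ge> 2" and hmax: "maximal1 q n \<beta>" and few: "few_repeats q \<beta> {1..2*(q-1)}"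
    and blocks: "{1..2*(q-1)} = K \<union> L" "K \<inter> L = {}" "card K = q - 1" "card L = q - 1"
    and i0: "i0 \<in> L" "\<beta> i0 = p" and p: "p \<ge> 1"
    and K: "\<forall>i\<in>K. p \<le> \<beta> i \<and> even (\<beta> i) = even p"
    and L: "\<forall>i\<in>L. p < \<beta> i \<longrightarrow> even (\<beta> i) \<noteq> even p"
    and om: "ordered_with q (lowered L p \<beta>) (q - 1)"
  shows "inM2 q n (lowered L p \<beta>) \<and> ordered q (lowered L p \<beta>) \<and> maximal2 q n (lowered L p \<beta>)"
proof -
  define I where "I = {1..2*(q-1)}"
  define \<mu> where "\<mu> = lowered L p \<beta>"
  have finI: "finite I" unfolding I_def by simp
  have K_ge: "\<forall>i\<in>K. p \<le> \<beta> i" using K by blast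
  have norm1_\<mu>: "norm1 q \<mu> = pow_sum q \<beta> {i\<in>I. p < \<beta> i} + card {i\<in>K. \<beta> i = p} * q ^ p
      + card {i\<in>L. \<beta> i \<le> p} * q ^ (p - 1)"
    and "norm1 q \<mu> \<le> norm1 q \<beta>"
    using pow_sum_lowered[OF finI blocks(1,2)[folded I_def] _ i0 p K_ge] blocks(4)
    unfolding norm1_pow_sum I_def \<mu>_def by simp_all
  then have inM: "inM2 q n \<mu>" using hmax unfolding maximal1_def inM2_def by simp
  have "norm2 q \<gamma> \<le> norm2 q \<mu>" if \<gamma>: "ordered q \<gamma>" "inM2 q n \<gamma>" for \<gamma>
  proof -
    obtain J where J: "J \<subseteq> I" "norm2 q \<gamma> = pow_sum q \<gamma> J"
      "card {j\<in>J. even (\<gamma> j)} \<le> q - 1" "card {j\<in>J. odd (\<gamma> j)} \<le> q - 1"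
      using norm2_as_pow_sum[OF \<gamma>(1)] unfolding I_def by blast
    have finJ: "finite J" using J(1) finI finite_subset by blast
    have "pow_sum q \<gamma> J \<le> norm1 q \<gamma>"
      using J(1) finI unfolding norm1_pow_sum pow_sum_def I_def by (intro sum_mono2) auto
    also have "norm1 q \<gamma> \<le> norm1 q \<beta>" using \<gamma>(2) hmax unfolding maximal1_def by blast
    finally have le: "pow_sum q \<gamma> J \<le> pow_sum q \<beta> I" unfolding norm1_pow_sum I_def .
    have same: "card {j\<in>J. even (\<gamma> j) = even p} \<le> q - 1"
      and other: "card {j\<in>J. even (\<gamma> j) \<noteq> even p} \<le> q - 1"
      using J(3,4) by (cases "even p"; simp)+
    have "pow_sum q \<gamma> J \<le> norm1 q \<mu>"
      unfolding norm1_\<mu>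
      by (rule pow_sum_comparison[OF q finI finJ few[folded I_def] same other le p
            lowered_parity_counts[OF finI blocks[folded I_def] K L]])
    then show ?thesis using J(2) norm2_eq_norm1[OF q om[folded \<mu>_def]] by simp
  qed
  moreover have "ordered q \<mu>" using om unfolding ordered_def \<mu>_def by blast
  ultimately show ?thesis using inM unfolding maximal2_def \<mu>_def by blast
qed

lemma lowering_first_block:
  fixes \<beta> :: "nat \<Rightarrow> nat"
  assumes q: "q \<ge> 2" and oe: "ordered_with q \<beta> e" and e: "e < q - 1"
  defines "p \<equiv> \<beta> (q - 1)"
  shows "odd p"
    and "\<forall>i\<in>{q..2*(q-1)}. p \<le> \<beta> i \<and> even (\<beta> i) = even p"
    and "\<forall>i\<in>{1..q-1}. p < \<beta> i \<longrightarrow> even (\<beta> i) \<noteq> even p"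
    and "ordered_with q (lowered {1..q-1} p \<beta>) (q - 1)"
proof -
  have ev: "\<forall>i\<in>{1..e}. even (\<beta> i)"
    and dec: "\<forall>i j. 1 \<le> i \<and> i \<le> j \<and> j \<le> e \<longrightarrow> \<beta> j \<le> \<beta> i"
    and od: "\<forall>i\<in>{e+1..2*(q-1)}. odd (\<beta> i)"
    and inc: "\<forall>i j. e+1 \<le> i \<and> i \<le> j \<and> j \<le> 2*(q-1) \<longrightarrow> \<beta> i \<le> \<beta> j"
    using oe unfolding ordered_with_def by blast+
  show p_odd: "odd p" unfolding p_def using od e by auto
  show "\<forall>i\<in>{q..2*(q-1)}. p \<le> \<beta> i \<and> even (\<beta> i) = even p"
    using inc od e p_odd unfolding p_def by auto
  (* entries of the first block exceeding p lie in the even part *)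
  have big_even: "i \<le> e" if "1 \<le> i" "i \<le> q - 1" "p < \<beta> i" for i
  proof (rule ccontr)
    assume "\<not> i \<le> e"
    then have "\<beta> i \<le> \<beta> (q - 1)" using inc that by auto
    then show False using that unfolding p_def by simp
  qed
  show "\<forall>i\<in>{1..q-1}. p < \<beta> i \<longrightarrow> even (\<beta> i) \<noteq> even p"
    using big_even ev p_odd by auto
  show "ordered_with q (lowered {1..q-1} p \<beta>) (q - 1)"
    unfolding ordered_with_def lowered_def
  proof (intro conjI ballI allI impI)
    fix i assume "i \<in> {1..q-1}"
    then show "even (if i \<in> {1..q-1} \<and> \<beta> i \<le> p then p - 1 else \<beta> i)"
      using big_even ev p_odd by (cases "\<beta> i \<le> p") auto
  next
    fix i j assume ij: "1 \<le> i \<and> i \<le> j \<and> j \<le> q - 1"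
    show "(if j \<in> {1..q-1} \<and> \<beta> j \<le> p then p - 1 else \<beta> j)
        \<le> (if i \<in> {1..q-1} \<and> \<beta> i \<le> p then p - 1 else \<beta> i)"
      using ij big_even[of j] dec[rule_format, of i j] by (cases "\<beta> j \<le> p") auto
  next
    fix i assume "i \<in> {q - 1 + 1..2*(q-1)}"
    then show "odd (if i \<in> {1..q-1} \<and> \<beta> i \<le> p then p - 1 else \<beta> i)"
      using od e by auto
  next
    fix i j assume ij: "q - 1 + 1 \<le> i \<and> i \<le> j \<and> j \<le> 2*(q-1)"
    then show "(if i \<in> {1..q-1} \<and> \<beta> i \<le> p then p - 1 else \<beta> i)
        \<le> (if j \<in> {1..q-1} \<and> \<beta> j \<le> p then p - 1 else \<beta> j)"
      using inc[rule_format, of i j] e by auto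
  qed simp
qed

lemma lowering_second_block:
  fixes \<beta> :: "nat \<Rightarrow> nat"
  assumes q: "q \<ge> 2" and oe: "ordered_with q \<beta> e" and e: "q - 1 < e" and nz: "\<beta> q \<noteq> 0"
  defines "p \<equiv> \<beta> q"
  shows "even p"
    and "\<forall>i\<in>{1..q-1}. p \<le> \<beta> i \<and> even (\<beta> i) = even p"
    and "\<forall>i\<in>{q..2*(q-1)}. p < \<beta> i \<longrightarrow> even (\<beta> i) \<noteq> even p"
    and "ordered_with q (lowered {q..2*(q-1)} p \<beta>) (q - 1)"
proof -
  have ev: "\<forall>i\<in>{1..e}. even (\<beta> i)"
    and dec: "\<forall>i j. 1 \<le> i \<and> i \<le> j \<and> j \<le> e \<longrightarrow> \<beta> j \<le> \<beta> i"
    and od: "\<forall>i\<in>{e+1..2*(q-1)}. odd (\<beta> i)"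
    and inc: "\<forall>i j. e+1 \<le> i \<and> i \<le> j \<and> j \<le> 2*(q-1) \<longrightarrow> \<beta> i \<le> \<beta> j"
    using oe unfolding ordered_with_def by blast+
  show p_even: "even p" unfolding p_def using ev e q by auto
  show "\<forall>i\<in>{1..q-1}. p \<le> \<beta> i \<and> even (\<beta> i) = even p"
  proof
    fix i assume i: "i \<in> {1..q-1}"
    then have "1 \<le> i \<and> i \<le> q \<and> q \<le> e" using e by auto
    then show "p \<le> \<beta> i \<and> even (\<beta> i) = even p"
      using dec ev e p_even i unfolding p_def by auto
  qed
  (* entries of the second block exceeding p lie in the odd part *)
  have big_odd: "e < i" if "q \<le> i" "p < \<beta> i" for i
  proof (rule ccontr)
    assume "\<not> e < i"
    then have "\<beta> i \<le> \<beta> q" using dec[rule_format, of q i] that q by auto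
    then show False using that unfolding p_def by simp
  qed
  show flip: "\<forall>i\<in>{q..2*(q-1)}. p < \<beta> i \<longrightarrow> even (\<beta> i) \<noteq> even p"
    using big_odd od p_even by (auto simp: Suc_le_eq)
  show "ordered_with q (lowered {q..2*(q-1)} p \<beta>) (q - 1)"
    unfolding ordered_with_def lowered_def
  proof (intro conjI ballI allI impI)
    fix i assume "i \<in> {q - 1 + 1..2*(q-1)}"
    then show "odd (if i \<in> {q..2*(q-1)} \<and> \<beta> i \<le> p then p - 1 else \<beta> i)"
      using flip p_even nz q unfolding p_def by (cases "\<beta> i \<le> \<beta> q") auto
  next
    fix i j assume ij: "q - 1 + 1 \<le> i \<and> i \<le> j \<and> j \<le> 2*(q-1)"
    show "(if i \<in> {q..2*(q-1)} \<and> \<beta> i \<le> p then p - 1 else \<beta> i)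
        \<le> (if j \<in> {q..2*(q-1)} \<and> \<beta> j \<le> p then p - 1 else \<beta> j)"
      using ij q big_odd[of i] inc[rule_format, of i j] by (cases "\<beta> i \<le> p") auto
  next
    fix i assume "i \<in> {1..q-1}"
    then show "even (if i \<in> {q..2*(q-1)} \<and> \<beta> i \<le> p then p - 1 else \<beta> i)"
      using ev e by auto
  next
    fix i j assume ij: "1 \<le> i \<and> i \<le> j \<and> j \<le> q - 1"
    then show "(if j \<in> {q..2*(q-1)} \<and> \<beta> j \<le> p then p - 1 else \<beta> j)
        \<le> (if i \<in> {q..2*(q-1)} \<and> \<beta> i \<le> p then p - 1 else \<beta> i)"
      using dec[rule_format, of i j] e by auto
  qed simp
qed

lemma index_blocks:
  assumes "q \<ge> 2"
  shows "{1..2*(q-1)} = {1..q-1} \<union> {q..2*(q-1)}" and "{1..q-1} \<inter> {q..2*(q-1::nat)} = {}"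
    and "card {1..q-1} = q - 1" and "card {q..2*(q-1)} = q - 1"
  using assms by auto

text \<open>Part (i): with exactly \<open>q - 1\<close> even entries, \<open>|\<cdot>|\<^sub>1\<close>-maximality gives \<open>|\<cdot>|\<^sub>2\<close>-maximality,
  since \<open>|\<gamma>|\<^sub>2 \<le> |\<gamma>|\<^sub>1\<close> always.\<close>
lemma balanced_maximal1_is_maximal2:
  assumes q: "q \<ge> 2" and o: "ordered_with q \<beta> (q - 1)" and hmax: "maximal1 q n \<beta>"
  shows "norm1 q \<beta> = norm2 q \<beta> \<and> maximal2 q n \<beta>"
proof -
  have eq: "norm2 q \<beta> = norm1 q \<beta>" by (rule norm2_eq_norm1[OF q o])
  have "norm2 q \<gamma> \<le> norm2 q \<beta>" if "ordered q \<gamma>" "inM2 q n \<gamma>" for \<gamma>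
    using norm2_le_norm1[OF that(1)] that(2) hmax eq unfolding maximal1_def by fastforce
  moreover have "ordered q \<beta>" using o unfolding ordered_def by blast
  ultimately show ?thesis using eq hmax unfolding maximal2_def maximal1_def by simp
qed

theorem propositionA2:
  fixes q n e :: nat and \<beta> :: "nat \<Rightarrow> nat"
  assumes hq: "q \<ge> 2"
    and hn: "n > 0"
    and hdvd: "(q - 1) dvd n"
    and hl: "digit_sum q n \<ge> 3 * (q - 1)"
    and hord: "ordered q \<beta>"
    and hmax: "maximal1 q n \<beta>"
    and he: "e = num_even q \<beta>"
  shows "(e = q - 1 \<longrightarrow> norm1 q \<beta> = norm2 q \<beta> \<and> maximal2 q n \<beta>)
    \<and> (e < q - 1 \<longrightarrow>
         (let \<mu> = (\<lambda>j. if 1 \<le> j \<and> j \<le> q - 1 \<and> \<beta> j \<le> \<beta> (q - 1) then \<beta> (q - 1) - 1 else \<beta> j)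
          in inM2 q n \<mu> \<and> ordered q \<mu> \<and> maximal2 q n \<mu>))
    \<and> (q - 1 < e \<longrightarrow>
         (let \<mu> = (\<lambda>j. if q \<le> j \<and> j \<le> 2 * (q - 1) \<and> \<beta> j \<le> \<beta> q then \<beta> q - 1 else \<beta> j)
          in inM2 q n \<mu> \<and> ordered q \<mu> \<and> maximal2 q n \<mu>))"
proof (rule conjI[OF impI conjI[OF impI impI]])
  obtain e' where "ordered_with q \<beta> e'" using hord unfolding ordered_def by blast
  with he have oe: "ordered_with q \<beta> e" using num_even_ordered_with by metis
  have gap: "norm1 q \<beta> + (q - 1) \<le> n" by (rule maximal1_gap[OF hq hdvd hl hmax])
  note few = maximal1_few_repeats[OF hq gap hmax]
  note blocks = index_blocks[OF hq]
  show "norm1 q \<beta> = norm2 q \<beta> \<and> maximal2 q n \<beta>" if "e = q - 1"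
    using balanced_maximal1_is_maximal2[OF hq _ hmax] oe that by simp
  show "let \<mu> = (\<lambda>j. if 1 \<le> j \<and> j \<le> q - 1 \<and> \<beta> j \<le> \<beta> (q - 1) then \<beta> (q - 1) - 1 else \<beta> j)
        in inM2 q n \<mu> \<and> ordered q \<mu> \<and> maximal2 q n \<mu>" if e: "e < q - 1"
  proof -
    note first = lowering_first_block[OF hq oe e]
    have KL: "{1..2*(q-1)} = {q..2*(q-1)} \<union> {1..q-1}" "{q..2*(q-1)} \<inter> {1..q-1} = {}"
      using blocks(1,2) by auto
    have "q - 1 \<in> {1..q-1}" "\<beta> (q - 1) \<ge> 1" using hq first(1) by (auto simp: odd_pos Suc_le_eq)
    from lowered_maximal2[OF hq hmax few KL blocks(4,3) this(1) refl this(2) first(2-4)]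
    show ?thesis unfolding Let_def lowered_def[abs_def] atLeastAtMost_iff conj_assoc .
  qed
  show "let \<mu> = (\<lambda>j. if q \<le> j \<and> j \<le> 2 * (q - 1) \<and> \<beta> j \<le> \<beta> q then \<beta> q - 1 else \<beta> j)
        in inM2 q n \<mu> \<and> ordered q \<mu> \<and> maximal2 q n \<mu>" if e: "q - 1 < e"
  proof -
    have "\<beta> q \<noteq> 0" using maximal1_nonzero[OF hq gap hmax] hq by simp
    note second = lowering_second_block[OF hq oe e this]
    have "q \<in> {q..2*(q-1)}" "\<beta> q \<ge> 1" using hq \<open>\<beta> q \<noteq> 0\<close> by auto
    from lowered_maximal2[OF hq hmax few blocks this(1) refl this(2) second(2-4)]
    show ?thesis unfolding Let_def lowered_def[abs_def] atLeastAtMost_iff conj_assoc .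
  qed
qed

end
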